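(* Let $A\in\mathbb{R}^{m\times m}$ be positive definite, let $B\in\mathbb{R}^{m\times n}$ ($n\le m$) be rank deficient, and let $\alpha\ge0$, $\beta>0$. Then the pseudo-spectral radius of the MGSSP iteration matrix satisfies $\gamma(\mathcal{T}(\alpha,\beta))<1$.
   Context: A real square matrix $A$ is called positive definite if $x^TAx>0$ for all nonzero $x\in\mathbb{R}^m$ ($A$ need not be symmetric). For $\alpha\ge0,\beta>0$ define $\mathcal{P}_{MGSSP}=\begin{pmatrix}\alpha I+2A & 2B\\ -2B^T & \beta I\end{pmatrix}$, $\mathcal{Q}_{MGSSP}=\begin{pmatrix}\alpha I+A & B\\ -B^T & \beta I\end{pmatrix}$, and the MGSSP iteration matrix $\mathcal{T}(\alpha,\beta)=\mathcal{P}_{MGSSP}^{-1}\mathcal{Q}_{MGSSP}$. For a square matrix $T$ with spectrum $\sigma(T)$, the pseudo-spectral radius is $\gamma(T)=\max\{|\lambda|:\lambda\in\sigma(T),\ \lambda\neq1\}$ (taken as $0$ if $\sigma(T)=\{1\}$). *)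

theory Defs
  imports "Jordan_Normal_Form.Spectral_Radius" "Jordan_Normal_Form.DL_Rank"
    "Jordan_Normal_Form.Gauss_Jordan_Elimination"
begin

definition pos_def_mat :: "nat \<Rightarrow> real mat \<Rightarrow> bool" where
  "pos_def_mat m A \<longleftrightarrow> A \<in> carrier_mat m m \<and>
     (\<forall>x \<in> carrier_vec m. x \<noteq> 0\<^sub>v m \<longrightarrow> x \<bullet> (A *\<^sub>v x) > 0)"

definition P_MGSSP :: "real \<Rightarrow> real \<Rightarrow> real mat \<Rightarrow> real mat \<Rightarrow> real mat" where
  "P_MGSSP \<alpha> \<beta> A B = four_block_mat
     (\<alpha> \<cdot>\<^sub>m 1\<^sub>m (dim_row A) + 2 \<cdot>\<^sub>m A)   (2 \<cdot>\<^sub>m B)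
     (- (2 \<cdot>\<^sub>m transpose_mat B))          (\<beta> \<cdot>\<^sub>m 1\<^sub>m (dim_col B))"

definition Q_MGSSP :: "real \<Rightarrow> real \<Rightarrow> real mat \<Rightarrow> real mat \<Rightarrow> real mat" where
  "Q_MGSSP \<alpha> \<beta> A B = four_block_mat
     (\<alpha> \<cdot>\<^sub>m 1\<^sub>m (dim_row A) + A)   B
     (- transpose_mat B)            (\<beta> \<cdot>\<^sub>m 1\<^sub>m (dim_col B))"

definition T_MGSSP :: "real \<Rightarrow> real \<Rightarrow> real mat \<Rightarrow> real mat \<Rightarrow> real mat" where
  "T_MGSSP \<alpha> \<beta> A B = the (mat_inverse (P_MGSSP \<alpha> \<beta> A B)) * Q_MGSSP \<alpha> \<beta> A B"

definition pseudo_spectral_radius :: "real mat \<Rightarrow> real" where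
  "pseudo_spectral_radius T =
     Sup ({0} \<union> cmod ` (spectrum (map_mat complex_of_real T) - {1}))"

end

theory Submission
  imports Defs
begin

text \<open>Split \<open>P = D + 2 K\<close> and \<open>Q = D + K\<close> with \<open>D = diag(\<alpha> I, \<beta> I)\<close> and the saddle point
  matrix \<open>K = [[A, B], [-B\<^sup>T, 0]]\<close>. If \<open>T x = \<mu> x\<close> with \<open>x \<noteq> 0\<close>, then \<open>Q x = \<mu> P x\<close>, so the Hermitian
  forms \<open>d = x\<^sup>* D x\<close> and \<open>k = x\<^sup>* K x\<close> satisfy \<open>d + k = \<mu> (d + 2 k)\<close>. Here \<open>d \<ge> 0\<close> is real, and
  since the \<open>B\<close>-part of \<open>K\<close> is skew it only contributes to \<open>Im k\<close>, so \<open>Re k\<close> is the (positive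
  definite) form of \<open>A\<close> on the first block of \<open>x\<close>. If \<open>Re k > 0\<close>, then \<open>|d + k| < |d + 2 k|\<close> forces
  \<open>|\<mu>| < 1\<close>; otherwise the first block vanishes, \<open>k = 0 < d\<close> and \<open>\<mu> = 1\<close>. The same forms show
  that \<open>P\<close> is nonsingular.\<close>

definition herm_form :: "complex mat \<Rightarrow> complex vec \<Rightarrow> complex" where
  "herm_form M x = (M *\<^sub>v x) \<bullet>c x"

lemma conjugate_append_vec:
  "conjugate (u @\<^sub>v v) = conjugate u @\<^sub>v conjugate (v :: 'a :: conjugate vec)"
  by (rule eq_vecI) (auto simp: append_vec_def Let_def)

lemma smult_mat_mult_vec: "dim_vec x = dim_col M \<Longrightarrow> (c \<cdot>\<^sub>m M) *\<^sub>v x = c \<cdot>\<^sub>v (M *\<^sub>v x)"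
  by (intro eq_vecI) (auto simp: scalar_prod_def sum_distrib_left mult.assoc)

lemma zero_mat_mult_vec: "x \<in> carrier_vec nc \<Longrightarrow> 0\<^sub>m nr nc *\<^sub>v x = 0\<^sub>v nr"
  by (intro eq_vecI) auto

lemma herm_form_four_block_mat:
  assumes "A \<in> carrier_mat n1 n1" "B \<in> carrier_mat n1 n2"
    and "C \<in> carrier_mat n2 n1" "D \<in> carrier_mat n2 n2"
    and "u \<in> carrier_vec n1" "v \<in> carrier_vec n2"
  shows "herm_form (four_block_mat A B C D) (u @\<^sub>v v)
    = herm_form A u + (B *\<^sub>v v) \<bullet>c u + (C *\<^sub>v u) \<bullet>c v + herm_form D v"
proof -
  have "herm_form (four_block_mat A B C D) (u @\<^sub>v v)
      = (A *\<^sub>v u + B *\<^sub>v v) \<bullet>c u + (C *\<^sub>v u + D *\<^sub>v v) \<bullet>c v"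
    using assms unfolding herm_form_def
    by (simp add: four_block_mat_mult_vec conjugate_append_vec scalar_prod_append[of _ n1 _ n2])
  also have "\<dots> = herm_form A u + (B *\<^sub>v v) \<bullet>c u + ((C *\<^sub>v u) \<bullet>c v + herm_form D v)"
    using assms unfolding herm_form_def
    by (simp add: add_scalar_prod_distrib[of _ n1] add_scalar_prod_distrib[of _ n2])
  finally show ?thesis by (simp add: add.assoc)
qed

lemma herm_form_real_lincomb:
  assumes "M \<in> carrier_mat n n" "N \<in> carrier_mat n n" "x \<in> carrier_vec n"
  shows "herm_form (map_mat complex_of_real (M + c \<cdot>\<^sub>m N)) x
    = herm_form (map_mat complex_of_real M) x + of_real c * herm_form (map_mat complex_of_real N) x"
proof -
  have "map_mat complex_of_real (M + c \<cdot>\<^sub>m N) = map_mat of_real M + of_real c \<cdot>\<^sub>m map_mat of_real N"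
    using assms by (intro eq_matI) auto
  then show ?thesis
    using assms unfolding herm_form_def
    by (simp add: add_mult_distrib_mat_vec[of _ n n] add_scalar_prod_distrib[of _ n]
        smult_mat_mult_vec)
qed

lemma Re_herm_form_real_mat:
  assumes A: "A \<in> carrier_mat n n" and u: "u \<in> carrier_vec n"
  shows "Re (herm_form (map_mat complex_of_real A) u)
    = (A *\<^sub>v map_vec Re u) \<bullet> map_vec Re u + (A *\<^sub>v map_vec Im u) \<bullet> map_vec Im u"
  using assms unfolding herm_form_def
  by (simp add: scalar_prod_def mult_mat_vec_def Re_sum sum_distrib_right lessThan_atLeast0 algebra_simps)

lemma Re_herm_form_pos_def_mat:
  assumes A: "pos_def_mat m A" and u: "u \<in> carrier_vec m" "u \<noteq> 0\<^sub>v m"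
  shows "Re (herm_form (map_mat complex_of_real A) u) > 0"
proof -
  let ?r = "map_vec Re u" and ?i = "map_vec Im u"
  have nonneg: "(A *\<^sub>v w) \<bullet> w \<ge> 0" and pos: "w \<noteq> 0\<^sub>v m \<Longrightarrow> (A *\<^sub>v w) \<bullet> w > 0"
    if "w \<in> carrier_vec m" for w
    using A that unfolding pos_def_mat_def
    by (auto simp: comm_scalar_prod[of _ m] intro: less_imp_le)
  have "?r \<noteq> 0\<^sub>v m \<or> ?i \<noteq> 0\<^sub>v m"
    using u by (auto simp: vec_eq_iff complex_eq_iff)
  then have "(A *\<^sub>v ?r) \<bullet> ?r + (A *\<^sub>v ?i) \<bullet> ?i > 0"
    using nonneg[of ?r] nonneg[of ?i] pos[of ?r] pos[of ?i] u by auto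
  moreover have "A \<in> carrier_mat m m" using A unfolding pos_def_mat_def by simp
  ultimately show ?thesis by (simp add: Re_herm_form_real_mat u(1))
qed

lemma cscalar_prod_transpose_real_mat:
  assumes B: "B \<in> carrier_mat n1 n2" and u: "u \<in> carrier_vec n1" and v: "v \<in> carrier_vec n2"
  shows "(map_mat complex_of_real B\<^sup>T *\<^sub>v u) \<bullet>c v = cnj ((map_mat complex_of_real B *\<^sub>v v) \<bullet>c u)"
proof -
  have "(map_mat complex_of_real B\<^sup>T *\<^sub>v u) \<bullet>c v
      = (\<Sum>j<n2. \<Sum>i<n1. of_real (B $$ (i,j)) * u $ i * cnj (v $ j))"
    using assms
    by (simp add: scalar_prod_def mult_mat_vec_def row_def col_def sum_distrib_right lessThan_atLeast0)
  also have "\<dots> = (\<Sum>i<n1. \<Sum>j<n2. of_real (B $$ (i,j)) * u $ i * cnj (v $ j))" by (rule sum.swap)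
  also have "\<dots> = cnj ((map_mat complex_of_real B *\<^sub>v v) \<bullet>c u)"
    using assms
    by (simp add: scalar_prod_def mult_mat_vec_def row_def cnj_sum sum_distrib_left sum_distrib_right
        lessThan_atLeast0 mult_ac)
  finally show ?thesis .
qed

lemma cmod_add_lt_cmod_add_double:
  fixes d k :: complex
  assumes "d \<ge> 0" "Re k > 0"
  shows "cmod (d + k) < cmod (d + 2 * k)"
proof -
  have "Im d = 0" "Re d \<ge> 0" using assms(1) by (auto simp: less_eq_complex_def)
  then have "(cmod (d + 2 * k))\<^sup>2 - (cmod (d + k))\<^sup>2 = 2 * Re d * Re k + 3 * (Re k)\<^sup>2 + 3 * (Im k)\<^sup>2"
    by (simp only: cmod_power2) (simp add: power2_eq_square algebra_simps)
  moreover have "2 * Re d * Re k + 3 * (Re k)\<^sup>2 + 3 * (Im k)\<^sup>2 > 0"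
    using \<open>Re d \<ge> 0\<close> assms(2) by (simp add: add_nonneg_pos add_pos_nonneg)
  ultimately have "(cmod (d + k))\<^sup>2 < (cmod (d + 2 * k))\<^sup>2" by linarith
  then show ?thesis by (rule power_less_imp_less_base) simp
qed

lemma generalized_eigen_of_inverse_mult:
  fixes P Pi Q :: "'a :: field mat"
  assumes "P \<in> carrier_mat n n" "Pi \<in> carrier_mat n n" "Q \<in> carrier_mat n n" "P * Pi = 1\<^sub>m n"
    and "x \<in> carrier_vec n" "(Pi * Q) *\<^sub>v x = \<mu> \<cdot>\<^sub>v x"
  shows "Q *\<^sub>v x = \<mu> \<cdot>\<^sub>v (P *\<^sub>v x)"
proof -
  have "Q *\<^sub>v x = (P * Pi * Q) *\<^sub>v x" using assms by simp
  also have "\<dots> = (P * (Pi * Q)) *\<^sub>v x" using assoc_mult_mat[OF assms(1-3)] by simp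
  also have "\<dots> = P *\<^sub>v ((Pi * Q) *\<^sub>v x)"
    using assms by (simp only: assoc_mult_mat_vec[of P n n "Pi * Q" n x] mult_carrier_mat)
  also have "\<dots> = \<mu> \<cdot>\<^sub>v (P *\<^sub>v x)" using assms by (simp only: mult_mat_vec)
  finally show ?thesis .
qed

lemma pseudo_spectral_radius_less_1I:
  assumes T: "T \<in> carrier_mat n n"
    and bound: "\<And>\<mu>. \<mu> \<in> spectrum (map_mat complex_of_real T) \<Longrightarrow> \<mu> \<noteq> 1 \<Longrightarrow> cmod \<mu> < 1"
  shows "pseudo_spectral_radius T < 1"
proof -
  let ?S = "{0} \<union> cmod ` (spectrum (map_mat complex_of_real T) - {1})"
  have "finite ?S"
    using card_finite_spectrum(1)[of "map_mat complex_of_real T" n] T by simp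
  moreover have "\<forall>s \<in> ?S. s < 1" using bound by auto
  ultimately show ?thesis
    unfolding pseudo_spectral_radius_def by (simp add: cSup_eq_Max)
qed

definition block_scalar_mat :: "real \<Rightarrow> real \<Rightarrow> nat \<Rightarrow> nat \<Rightarrow> real mat" where
  "block_scalar_mat \<alpha> \<beta> m n = four_block_mat (\<alpha> \<cdot>\<^sub>m 1\<^sub>m m) (0\<^sub>m m n) (0\<^sub>m n m) (\<beta> \<cdot>\<^sub>m 1\<^sub>m n)"

definition saddle_point_mat :: "real mat \<Rightarrow> real mat \<Rightarrow> real mat" where
  "saddle_point_mat A B = four_block_mat A B (- B\<^sup>T) (0\<^sub>m (dim_col B) (dim_col B))"

lemma
  assumes "A \<in> carrier_mat m m" "B \<in> carrier_mat m n"
  shows P_MGSSP_split: "P_MGSSP \<alpha> \<beta> A B = block_scalar_mat \<alpha> \<beta> m n + 2 \<cdot>\<^sub>m saddle_point_mat A B"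
    and Q_MGSSP_split: "Q_MGSSP \<alpha> \<beta> A B = block_scalar_mat \<alpha> \<beta> m n + saddle_point_mat A B"
  using assms unfolding P_MGSSP_def Q_MGSSP_def block_scalar_mat_def saddle_point_mat_def
  by (auto intro!: eq_matI)

lemma P_MGSSP_carrier:
  "A \<in> carrier_mat m m \<Longrightarrow> B \<in> carrier_mat m n \<Longrightarrow> P_MGSSP \<alpha> \<beta> A B \<in> carrier_mat (m + n) (m + n)"
  unfolding P_MGSSP_def by auto

lemma Q_MGSSP_carrier:
  "A \<in> carrier_mat m m \<Longrightarrow> B \<in> carrier_mat m n \<Longrightarrow> Q_MGSSP \<alpha> \<beta> A B \<in> carrier_mat (m + n) (m + n)"
  unfolding Q_MGSSP_def by auto

lemma herm_form_block_scalar_mat: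
  assumes "u \<in> carrier_vec m" "v \<in> carrier_vec n"
  shows "herm_form (map_mat complex_of_real (block_scalar_mat \<alpha> \<beta> m n)) (u @\<^sub>v v)
    = of_real \<alpha> * (u \<bullet>c u) + of_real \<beta> * (v \<bullet>c v)"
proof -
  have "map_mat complex_of_real (block_scalar_mat \<alpha> \<beta> m n)
      = four_block_mat (of_real \<alpha> \<cdot>\<^sub>m 1\<^sub>m m) (0\<^sub>m m n) (0\<^sub>m n m) (of_real \<beta> \<cdot>\<^sub>m 1\<^sub>m n)"
    unfolding block_scalar_mat_def by (intro eq_matI) auto
  then show ?thesis
    using assms by (simp add: herm_form_four_block_mat[of _ m _ n])
      (simp add: herm_form_def smult_mat_mult_vec zero_mat_mult_vec)
qed

lemma herm_form_saddle_point_mat: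
  assumes A: "A \<in> carrier_mat m m" and B: "B \<in> carrier_mat m n"
    and u: "u \<in> carrier_vec m" and v: "v \<in> carrier_vec n"
  defines "z \<equiv> (map_mat complex_of_real B *\<^sub>v v) \<bullet>c u"
  shows "herm_form (map_mat complex_of_real (saddle_point_mat A B)) (u @\<^sub>v v)
    = herm_form (map_mat complex_of_real A) u + (z - cnj z)"
proof -
  have "map_mat complex_of_real (saddle_point_mat A B)
      = four_block_mat (map_mat of_real A) (map_mat of_real B) (- (map_mat of_real B)\<^sup>T) (0\<^sub>m n n)"
    using A B unfolding saddle_point_mat_def by (intro eq_matI) auto
  moreover have "(- (map_mat complex_of_real B)\<^sup>T *\<^sub>v u) \<bullet>c v = - cnj z"
    using cscalar_prod_transpose_real_mat[OF B u v] B u v unfolding z_def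
    by (simp add: map_mat_transpose uminus_scalar_prod[of _ n])
  ultimately show ?thesis
    using assms by (simp add: herm_form_four_block_mat[of _ m _ n])
      (simp add: herm_form_def zero_mat_mult_vec)
qed

lemma herm_forms_MGSSP:
  assumes A: "pos_def_mat m A" and B: "B \<in> carrier_mat m n" and "\<alpha> \<ge> 0" "\<beta> > 0"
    and x: "x \<in> carrier_vec (m + n)" "x \<noteq> 0\<^sub>v (m + n)"
  obtains d k where "herm_form (map_mat complex_of_real (P_MGSSP \<alpha> \<beta> A B)) x = d + 2 * k"
    and "herm_form (map_mat complex_of_real (Q_MGSSP \<alpha> \<beta> A B)) x = d + k"
    and "d \<ge> 0" and "Re k > 0 \<or> k = 0 \<and> d > 0"
proof -
  have Am: "A \<in> carrier_mat m m" using A unfolding pos_def_mat_def by simp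
  define u v where "u = vec_first x m" and "v = vec_last x n"
  have u: "u \<in> carrier_vec m" and v: "v \<in> carrier_vec n" and x_split: "x = u @\<^sub>v v"
    using x(1) unfolding u_def v_def by simp_all
  let ?D = "block_scalar_mat \<alpha> \<beta> m n" and ?K = "saddle_point_mat A B"
  have DK: "?D \<in> carrier_mat (m + n) (m + n)" "?K \<in> carrier_mat (m + n) (m + n)"
    using Am B unfolding block_scalar_mat_def saddle_point_mat_def by auto
  define d where "d = herm_form (map_mat complex_of_real ?D) x"
  define k where "k = herm_form (map_mat complex_of_real ?K) x"
  have "herm_form (map_mat complex_of_real (P_MGSSP \<alpha> \<beta> A B)) x = d + 2 * k"
    using herm_form_real_lincomb[OF DK x(1), of 2] unfolding d_def k_def P_MGSSP_split[OF Am B]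
    by simp
  moreover have "herm_form (map_mat complex_of_real (Q_MGSSP \<alpha> \<beta> A B)) x = d + k"
  proof -
    have "1 \<cdot>\<^sub>m ?K = ?K" by (intro eq_matI) auto
    then show ?thesis
      using herm_form_real_lincomb[OF DK x(1), of 1] unfolding d_def k_def Q_MGSSP_split[OF Am B]
      by simp
  qed
  moreover have d: "d = of_real \<alpha> * (u \<bullet>c u) + of_real \<beta> * (v \<bullet>c v)"
    unfolding d_def x_split by (rule herm_form_block_scalar_mat[OF u v])
  moreover have "d \<ge> 0"
    unfolding d using \<open>\<alpha> \<ge> 0\<close> \<open>\<beta> > 0\<close>
    by (intro add_nonneg_nonneg mult_nonneg_nonneg conjugate_square_ge_0_vec)
      (simp_all add: less_eq_complex_def)
  moreover have "Re k > 0 \<or> k = 0 \<and> d > 0"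
  proof (cases "u = 0\<^sub>v m")
    case True
    then have "k = 0"
      using Am B v unfolding k_def x_split herm_form_saddle_point_mat[OF Am B u v]
      by (simp add: herm_form_def)
    moreover have "v \<noteq> 0\<^sub>v n" using x(2) True unfolding x_split by auto
    then have "d > 0"
      unfolding d using True conjugate_square_greater_0_vec[OF v] \<open>\<beta> > 0\<close>
      by (simp add: less_complex_def)
    ultimately show ?thesis by simp
  next
    case False
    then show ?thesis
      using Re_herm_form_pos_def_mat[OF A u]
      unfolding k_def x_split herm_form_saddle_point_mat[OF Am B u v] by simp
  qed
  ultimately show ?thesis using that by blast
qed

lemma det_P_MGSSP_nonzero:
  assumes A: "pos_def_mat m A" and B: "B \<in> carrier_mat m n" and ab: "\<alpha> \<ge> 0" "\<beta> > 0"
  shows "det (P_MGSSP \<alpha> \<beta> A B) \<noteq> 0"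
proof
  let ?P = "P_MGSSP \<alpha> \<beta> A B"
  have P: "?P \<in> carrier_mat (m + n) (m + n)"
    using A B by (simp add: P_MGSSP_carrier pos_def_mat_def)
  assume "det ?P = 0"
  then obtain v where v: "v \<in> carrier_vec (m + n)" "v \<noteq> 0\<^sub>v (m + n)" "?P *\<^sub>v v = 0\<^sub>v (m + n)"
    using det_0_iff_vec_prod_zero_field[OF P] by auto
  let ?x = "map_vec complex_of_real v"
  have x: "?x \<in> carrier_vec (m + n)" "?x \<noteq> 0\<^sub>v (m + n)" using v by auto
  have "map_mat complex_of_real ?P *\<^sub>v ?x = map_vec complex_of_real (?P *\<^sub>v v)"
    by (rule of_real_hom.mult_mat_vec_hom[OF P v(1), symmetric])
  then have "herm_form (map_mat complex_of_real ?P) ?x = 0"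
    using v unfolding herm_form_def by (simp add: of_real_hom.vec_hom_zero)
  moreover obtain d k where "herm_form (map_mat complex_of_real ?P) ?x = d + 2 * k"
    and "d \<ge> 0" and "Re k > 0 \<or> k = 0 \<and> d > 0"
    using herm_forms_MGSSP[OF A B ab x] by blast
  ultimately show False by (auto simp: less_eq_complex_def less_complex_def complex_eq_iff)
qed

lemma T_MGSSP_factor:
  assumes A: "pos_def_mat m A" and B: "B \<in> carrier_mat m n" and ab: "\<alpha> \<ge> 0" "\<beta> > 0"
  obtains Pi where "T_MGSSP \<alpha> \<beta> A B = Pi * Q_MGSSP \<alpha> \<beta> A B"
    and "P_MGSSP \<alpha> \<beta> A B * Pi = 1\<^sub>m (m + n)" and "Pi \<in> carrier_mat (m + n) (m + n)"
proof -
  let ?P = "P_MGSSP \<alpha> \<beta> A B"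
  have P: "?P \<in> carrier_mat (m + n) (m + n)"
    using A B by (simp add: P_MGSSP_carrier pos_def_mat_def)
  have "?P \<in> Units (ring_mat TYPE(real) (m + n) ())"
    by (rule det_non_zero_imp_unit[OF P det_P_MGSSP_nonzero[OF A B ab]])
  then obtain Pi where "mat_inverse ?P = Some Pi"
    using mat_inverse(1)[OF P] by fastforce
  with mat_inverse(2)[OF P this] that show ?thesis
    unfolding T_MGSSP_def by simp
qed

lemma cmod_eigenvalue_T_MGSSP_less_1:
  assumes A: "pos_def_mat m A" and B: "B \<in> carrier_mat m n" and ab: "\<alpha> \<ge> 0" "\<beta> > 0"
    and \<mu>: "\<mu> \<in> spectrum (map_mat complex_of_real (T_MGSSP \<alpha> \<beta> A B))" "\<mu> \<noteq> 1"
  shows "cmod \<mu> < 1"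
proof -
  let ?c = "map_mat complex_of_real"
  let ?P = "P_MGSSP \<alpha> \<beta> A B" and ?Q = "Q_MGSSP \<alpha> \<beta> A B"
  have Am: "A \<in> carrier_mat m m" using A unfolding pos_def_mat_def by simp
  have P: "?P \<in> carrier_mat (m + n) (m + n)" and Q: "?Q \<in> carrier_mat (m + n) (m + n)"
    using Am B by (simp_all add: P_MGSSP_carrier Q_MGSSP_carrier)
  obtain Pi where T: "T_MGSSP \<alpha> \<beta> A B = Pi * ?Q" and PPi: "?P * Pi = 1\<^sub>m (m + n)"
    and Pi: "Pi \<in> carrier_mat (m + n) (m + n)"
    using T_MGSSP_factor[OF A B ab] .
  have cT: "?c (T_MGSSP \<alpha> \<beta> A B) = ?c Pi * ?c ?Q"
    unfolding T by (rule of_real_hom.mat_hom_mult[OF Pi Q])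
  have cPPi: "?c ?P * ?c Pi = 1\<^sub>m (m + n)"
    using of_real_hom.mat_hom_mult[OF P Pi] PPi of_real_hom.mat_hom_one by metis
  obtain x where x: "x \<in> carrier_vec (m + n)" "x \<noteq> 0\<^sub>v (m + n)"
    and eig: "(?c Pi * ?c ?Q) *\<^sub>v x = \<mu> \<cdot>\<^sub>v x"
    using \<mu>(1) Pi Q unfolding cT spectrum_def eigenvalue_def eigenvector_def by auto
  have "?c ?Q *\<^sub>v x = \<mu> \<cdot>\<^sub>v (?c ?P *\<^sub>v x)"
    using generalized_eigen_of_inverse_mult[OF _ _ _ cPPi x(1) eig] P Q Pi by simp
  then have "herm_form (?c ?Q) x = \<mu> * herm_form (?c ?P) x"
    using P x(1) unfolding herm_form_def by simp
  moreover obtain d k where "herm_form (?c ?P) x = d + 2 * k" and "herm_form (?c ?Q) x = d + k"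
    and "d \<ge> 0" and "Re k > 0 \<or> k = 0 \<and> d > 0"
    using herm_forms_MGSSP[OF A B ab x] by blast
  ultimately have eq: "d + k = \<mu> * (d + 2 * k)" and "d \<ge> 0" and k: "Re k > 0 \<or> k = 0 \<and> d > 0"
    by simp_all
  show ?thesis
  proof (cases "k = 0")
    case True
    then show ?thesis using eq k \<mu>(2) by simp
  next
    case False
    then have "cmod (d + k) < cmod (d + 2 * k)"
      using k \<open>d \<ge> 0\<close> by (simp add: cmod_add_lt_cmod_add_double)
    then show ?thesis
      unfolding eq norm_mult by (simp add: mult_less_cancel_right2)
  qed
qed

theorem lemma4p3:
  fixes A B :: "real mat" and m n :: nat and \<alpha> \<beta> :: real
  assumes "A \<in> carrier_mat m m" and "pos_def_mat m A"
    and "B \<in> carrier_mat m n" and "n \<le> m"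
    and "vec_space.rank m B < n"
    and "\<alpha> \<ge> 0" and "\<beta> > 0"
  shows "pseudo_spectral_radius (T_MGSSP \<alpha> \<beta> A B) < 1"
proof (rule pseudo_spectral_radius_less_1I)
  obtain Pi where "T_MGSSP \<alpha> \<beta> A B = Pi * Q_MGSSP \<alpha> \<beta> A B" "Pi \<in> carrier_mat (m + n) (m + n)"
    using T_MGSSP_factor[OF assms(2,3,6,7)] by blast
  then show "T_MGSSP \<alpha> \<beta> A B \<in> carrier_mat (m + n) (m + n)"
    using Q_MGSSP_carrier[OF assms(1,3)] by simp
  show "cmod \<mu> < 1" if "\<mu> \<in> spectrum (map_mat complex_of_real (T_MGSSP \<alpha> \<beta> A B))" "\<mu> \<noteq> 1" for \<mu>
    using cmod_eigenvalue_T_MGSSP_less_1[OF assms(2,3,6,7) that] .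
qed

end
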